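(* Let $q$ be an odd positive integer, let $\omega_q = e^{\mathrm{i}2\pi/q}$, and let $m < q$ be a positive integer. Let $\mathbf{V}$ be the $m\times m$ Vandermonde matrix with $\mathbf{V}(i,j) = s_j^{\,i}$ for $i,j\in\{0,\dots,m-1\}$, where $s_0,\dots,s_{m-1}$ are distinct elements of $\{1,\omega_q,\omega_q^2,\dots,\omega_q^{q-1}\}$. Then, with $c_1 = 5.5$, $$\kappa(\mathbf{V}) \le O\!\left(q^{\,q-m+c_1}\right),$$ i.e. there is an absolute constant $C$ (independent of $q$, $m$ and the choice of the $s_j$) such that $\kappa(\mathbf{V}) \le C\, q^{\,q-m+5.5}$.
   Context: For a square matrix $\mathbf{M}$, $\|\mathbf{M}\|$ denotes its largest singular value and the condition number is $\kappa(\mathbf{M}) = \|\mathbf{M}\|\,\|\mathbf{M}^{-1}\|$ (infinite if $\mathbf{M}$ is singular). $\mathrm{i}=\sqrt{-1}$. *)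

theory Defs
  imports Complex_Main "HOL-Library.Extended_Real" "Jordan_Normal_Form.Matrix"
begin

definition vec_2norm :: "complex vec \<Rightarrow> real" where
  "vec_2norm v = sqrt (\<Sum>i<dim_vec v. (cmod (v $ i))^2)"

text \<open>Spectral norm = largest singular value = operator norm induced by the 2-norm.\<close>
definition spec_norm :: "complex mat \<Rightarrow> real" where
  "spec_norm A = Sup {vec_2norm (A *\<^sub>v v) | v. v \<in> carrier_vec (dim_col A) \<and> vec_2norm v \<le> 1}"

definition cond_num :: "complex mat \<Rightarrow> ereal" where
  "cond_num A = (if invertible_mat A
     then ereal (spec_norm A * spec_norm (THE B. B \<in> carrier_mat (dim_row A) (dim_row A)
                                             \<and> inverts_mat A B \<and> inverts_mat B A))
     else \<infinity>)"

definition omega :: "nat \<Rightarrow> complex" where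
  "omega q = exp (\<i> * 2 * pi / of_nat q)"

definition vandermonde :: "nat \<Rightarrow> (nat \<Rightarrow> complex) \<Rightarrow> complex mat" where
  "vandermonde m s = mat m m (\<lambda>(i,j). s j ^ i)"

end

theory Submission
  imports Defs "Jordan_Normal_Form.Determinant"
begin

text \<open>
  For v in C^m let Y i = (sum j<m. v j * s j ^ i), so that V v lists Y 0, ..., Y (m - 1).
  As the nodes are distinct q-th roots of unity, Parseval gives (sum i<q. |Y i|^2) = q |v|^2,
  so it suffices to bound the tail Y m, ..., Y (q - 1) by the head. For each of the q - m
  roots of unity w that are not nodes, orthogonality gives (sum i<q. Y i * cnj w ^ i) = 0;
  hence the tail polynomial Z z = (sum k<q-m. Y (m + k) * z ^ k) is bounded by
  (sum i<m. |Y i|) at the points cnj w. These points are 2/q apart, so Lagrange interpolation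
  bounds the coefficients of Z, i.e. the tail, by q^(q-m+1) times the head. Hence
  |v| <= q^(q-m+2) |V v|, and together with |V v| <= m^2 |v| this gives
  kappa(V) <= q^(q-m+4), so C = 1 works.
\<close>

section \<open>Roots of unity\<close>

lemma omega_pow_eq_cis: "omega q ^ k = cis (2 * pi * real k / real q)"
  unfolding omega_def by (simp add: cis_conv_exp exp_of_nat_mult[symmetric] algebra_simps)

lemma omega_pow_root_unity: "0 < q \<Longrightarrow> (omega q ^ k) ^ q = 1"
  by (simp add: omega_pow_eq_cis DeMoivre)

lemma half_le_sin:
  fixes x :: real
  assumes "0 \<le> x" "x\<^sup>2 \<le> 3"
  shows "x / 2 \<le> sin x"
proof -
  have "\<bar>sin x - (\<Sum>n<3. sin_coeff n * x ^ n)\<bar> \<le> inverse (fact 3) * \<bar>x\<bar> ^ 3"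
    by (rule Maclaurin_sin_bound)
  then have "\<bar>sin x - x\<bar> \<le> x ^ 3 / 6"
    using assms(1) by (simp add: numeral_3_eq_3 sin_coeff_def fact_numeral)
  then have "x - x ^ 3 / 6 \<le> sin x"
    by linarith
  moreover have "x ^ 3 \<le> 3 * x"
    using mult_left_mono[OF assms(2,1)] by (simp add: power3_eq_cube power2_eq_square mult.commute)
  ultimately show ?thesis by linarith
qed

lemma sin_pi_div_ge_inverse:
  assumes "2 \<le> q"
  shows "1 / real q \<le> sin (pi / real q)"
proof (cases "q = 2")
  case False
  with assms have q3: "3 \<le> real q" by simp
  have "pi / real q \<le> 4 / 3"
    using pi_less_4 q3 by (simp add: divide_simps)
  then have "(pi / real q)\<^sup>2 \<le> (4 / 3)\<^sup>2"
    by (intro power_mono) auto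
  also have "\<dots> \<le> 3"
    by (simp add: power2_eq_square)
  finally have "pi / real q / 2 \<le> sin (pi / real q)"
    by (intro half_le_sin) auto
  moreover have "1 / real q \<le> pi / real q / 2"
    using pi_ge_two q3 by (simp add: divide_simps)
  ultimately show ?thesis by linarith
qed simp

lemma sin_pi_mult_div_ge_inverse:
  assumes "0 < k" "k < q"
  shows "1 / real q \<le> sin (pi * real k / real q)"
proof -
  define k' where "k' = min k (q - k)"
  have "sin (pi * real k / real q) = sin (pi * real k' / real q)"
  proof (cases "k \<le> q - k")
    case False
    then have "pi * real k' / real q = pi - pi * real k / real q"
      using assms by (simp add: k'_def of_nat_diff field_simps)
    then show ?thesis by simp
  qed (simp add: k'_def)
  moreover have "sin (pi / real q) \<le> sin (pi * real k' / real q)"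
  proof (rule sin_monotone_2pi_le)
    have "1 \<le> k'" "2 * real k' \<le> real q" using assms by (auto simp: k'_def)
    then show "pi / real q \<le> pi * real k' / real q" "pi * real k' / real q \<le> pi / 2"
      using assms by (auto simp: field_simps)
    show "- (pi / 2) \<le> pi / real q"
      by (rule order_trans[of _ 0]) auto
  qed
  ultimately show ?thesis
    using sin_pi_div_ge_inverse[of q] assms by linarith
qed

lemma norm_1_minus_cis_double: "cmod (1 - cis (2 * y)) = 2 * \<bar>sin y\<bar>"
proof -
  have "(cmod (1 - cis (2 * y)))\<^sup>2 = (1 - cos (2 * y))\<^sup>2 + (sin (2 * y))\<^sup>2"
    by (simp add: cmod_power2)
  also have "\<dots> = 2 * (1 - cos (2 * y))"
    using sin_cos_squared_add[of "2 * y"] by (simp add: power2_eq_square algebra_simps)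
  also have "\<dots> = (2 * \<bar>sin y\<bar>)\<^sup>2"
    by (simp only: cos_double_sin) (simp add: power_mult_distrib)
  finally show ?thesis
    by (rule power2_eq_imp_eq) auto
qed

lemma norm_diff_roots_unity_ge:
  fixes z w :: complex
  assumes "z ^ q = 1" "w ^ q = 1" "z \<noteq> w"
  shows "2 / real q \<le> cmod (z - w)"
proof (cases "q = 0")
  case False
  define c where "c k = cis (2 * pi * real k / real q)" for k
  have dist: "2 / real q \<le> cmod (c a - c b)" if "a < b" "b < q" for a b
  proof -
    have "c b = c a * cis (2 * (pi * real (b - a) / real q))"
      using that by (simp add: c_def cis_mult of_nat_diff field_simps)
    then have "c a - c b = c a * (1 - cis (2 * (pi * real (b - a) / real q)))"
      by (simp add: algebra_simps)
    then have "cmod (c a - c b) = 2 * \<bar>sin (pi * real (b - a) / real q)\<bar>"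
      by (simp only: c_def norm_mult norm_cis mult_1 norm_1_minus_cis_double)
    moreover have "1 / real q \<le> sin (pi * real (b - a) / real q)"
      using that by (intro sin_pi_mult_div_ge_inverse) auto
    ultimately show ?thesis
      by simp
  qed
  from False obtain a b where "a < q" "b < q" "z = c a" "w = c b"
    using bij_betw_roots_unity[of q] assms unfolding bij_betw_def c_def by blast
  with assms(3) dist[of a b] dist[of b a] show ?thesis
    by (cases a b rule: linorder_cases) (auto simp: norm_minus_commute)
qed simp

lemma sum_pow_mult_cnj_pow_roots_unity:
  fixes z w :: complex
  assumes "z ^ q = 1" "w ^ q = 1"
  shows "(\<Sum>i<q. z ^ i * cnj w ^ i) = (if z = w then of_nat q else 0)"
proof (cases "q = 0")
  case False
  then have "cmod w = 1"
    using power_eq_1_iff[OF assms(2)] by simp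
  then have w_cnj_w: "w * cnj w = 1" and "w \<noteq> 0"
    using complex_norm_square[of w] by auto
  have sum_eq: "(\<Sum>i<q. z ^ i * cnj w ^ i) = (\<Sum>i<q. (z * cnj w) ^ i)"
    by (simp add: power_mult_distrib)
  show ?thesis
  proof (cases "z = w")
    case True
    then show ?thesis
      unfolding sum_eq by (simp add: w_cnj_w)
  next
    case False
    have "z * cnj w = z / w"
      using w_cnj_w \<open>w \<noteq> 0\<close> by (simp add: field_simps)
    moreover have "z / w \<noteq> 1" "(z / w) ^ q = 1"
      using False assms \<open>w \<noteq> 0\<close> by (auto simp: power_divide)
    ultimately show ?thesis
      unfolding sum_eq using False by (simp add: geometric_sum)
  qed
qed simp

lemma parseval_roots_unity:
  fixes s :: "'a \<Rightarrow> complex"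
  assumes "finite J" "inj_on s J" "\<And>j. j \<in> J \<Longrightarrow> s j ^ q = 1"
  shows "(\<Sum>i<q. (cmod (\<Sum>j\<in>J. v j * s j ^ i))\<^sup>2) = real q * (\<Sum>j\<in>J. (cmod (v j))\<^sup>2)"
proof -
  have "complex_of_real (\<Sum>i<q. (cmod (\<Sum>j\<in>J. v j * s j ^ i))\<^sup>2)
      = (\<Sum>i<q. (\<Sum>j\<in>J. v j * s j ^ i) * cnj (\<Sum>k\<in>J. v k * s k ^ i))"
    by (simp only: of_real_sum complex_norm_square)
  also have "\<dots> = (\<Sum>i<q. \<Sum>j\<in>J. \<Sum>k\<in>J. v j * cnj (v k) * (s j ^ i * cnj (s k) ^ i))"
    by (simp add: cnj_sum sum_product mult_ac)
  also have "\<dots> = (\<Sum>j\<in>J. \<Sum>k\<in>J. v j * cnj (v k) * (\<Sum>i<q. s j ^ i * cnj (s k) ^ i))"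
    by (simp only: sum.swap[where A = "{..<q}"] sum_distrib_left)
  also have "\<dots> = (\<Sum>j\<in>J. \<Sum>k\<in>J. if j = k then of_nat q * (v j * cnj (v k)) else 0)"
    using assms by (intro sum.cong refl) (simp add: sum_pow_mult_cnj_pow_roots_unity inj_on_eq_iff)
  also have "\<dots> = (\<Sum>j\<in>J. of_nat q * (v j * cnj (v j)))"
    using assms(1) by simp
  also have "\<dots> = complex_of_real (real q * (\<Sum>j\<in>J. (cmod (v j))\<^sup>2))"
    by (simp only: of_real_mult of_real_of_nat_eq of_real_sum complex_norm_square sum_distrib_left)
  finally show ?thesis
    by (simp only: of_real_eq_iff)
qed

lemma sum_roots_unity_mult_cnj_pow_eq_0:
  fixes s :: "'a \<Rightarrow> complex"
  assumes "finite J" "\<And>j. j \<in> J \<Longrightarrow> s j ^ q = 1" "w ^ q = 1" "w \<notin> s ` J"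
  shows "(\<Sum>i<q. (\<Sum>j\<in>J. v j * s j ^ i) * cnj w ^ i) = 0"
proof -
  have "(\<Sum>i<q. (\<Sum>j\<in>J. v j * s j ^ i) * cnj w ^ i) = (\<Sum>j\<in>J. v j * (\<Sum>i<q. s j ^ i * cnj w ^ i))"
    unfolding sum_distrib_right sum_distrib_left mult.assoc by (rule sum.swap)
  also have "\<dots> = 0"
    using assms by (auto simp: sum_pow_mult_cnj_pow_roots_unity intro!: sum.neutral)
  finally show ?thesis .
qed

section \<open>Lagrange interpolation\<close>

lemma norm_coeff_prod_linear_le:
  fixes R :: "'a::real_normed_field set"
  assumes "finite R" "\<And>x. x \<in> R \<Longrightarrow> norm x \<le> 1"
  shows "norm (coeff (\<Prod>x\<in>R. [:- x, 1:]) k) \<le> 2 ^ card R"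
  using assms
proof (induction R arbitrary: k rule: finite_induct)
  case empty
  then show ?case by (cases k) auto
next
  case (insert x R)
  define p where "p = (\<Prod>y\<in>R. [:- y, 1:])"
  have IH: "norm (coeff p j) \<le> 2 ^ card R" for j
    unfolding p_def using insert by auto
  have "coeff (\<Prod>y\<in>insert x R. [:- y, 1:]) k = - x * coeff p k + coeff (pCons 0 p) k"
    using insert(1,2) by (simp add: p_def)
  also have "norm \<dots> \<le> norm x * norm (coeff p k) + norm (coeff (pCons 0 p) k)"
    by (metis norm_minus_cancel norm_mult norm_triangle_ineq)
  also have "\<dots> \<le> 1 * 2 ^ card R + 2 ^ card R"
    using insert(4)[of x] IH[of k] IH[of "k - 1"]
    by (intro add_mono mult_mono) (auto simp: coeff_pCons split: nat.split)
  finally show ?case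
    using insert(1,2) by simp
qed

lemma lagrange_interpolation:
  fixes Z :: "'a::field poly"
  assumes "finite R" "degree Z < card R"
  shows "Z = (\<Sum>x\<in>R. smult (poly Z x / (\<Prod>y\<in>R - {x}. x - y)) (\<Prod>y\<in>R - {x}. [:- y, 1:]))"
    (is "Z = ?P")
proof (rule poly_eqI_degree)
  have poly_basis: "poly (\<Prod>y\<in>R - {x}. [:- y, 1:]) z = (if z = x then (\<Prod>y\<in>R - {x}. x - y) else 0)"
    if "x \<in> R" "z \<in> R" for x z
    using that assms(1) by (auto simp: poly_prod prod_zero_iff)
  have basis_nonzero: "(\<Prod>y\<in>R - {x}. x - y) \<noteq> 0" for x
    using assms(1) by (simp add: prod_zero_iff)
  show "poly Z z = poly ?P z" if "z \<in> R" for z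
    using that assms(1) basis_nonzero by (simp add: poly_sum poly_basis if_distrib cong: if_cong)
  have "degree ?P \<le> card R - 1"
  proof (rule degree_sum_le[OF assms(1)])
    fix x assume "x \<in> R"
    have "degree (\<Prod>y\<in>R - {x}. [:- y, 1:]) \<le> card (R - {x})"
      using degree_prod_sum_le[of "R - {x}" "\<lambda>y. [:- y, 1:]"] assms(1) by simp
    then show "degree (smult (poly Z x / (\<Prod>y\<in>R - {x}. x - y)) (\<Prod>y\<in>R - {x}. [:- y, 1:]))
        \<le> card R - 1"
      using \<open>x \<in> R\<close> assms(1) degree_smult_le order_trans by fastforce
  qed
  then show "degree ?P < card R"
    using assms(2) by linarith
qed (use assms in auto)

lemma norm_coeff_le_interpolation:
  fixes Z :: "'a::real_normed_field poly"
  assumes "finite R" "degree Z < card R" "\<And>x. x \<in> R \<Longrightarrow> norm x \<le> 1"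
    and dist: "\<And>x y. x \<in> R \<Longrightarrow> y \<in> R \<Longrightarrow> x \<noteq> y \<Longrightarrow> \<delta> \<le> norm (x - y)" and "0 < \<delta>"
  shows "norm (coeff Z k) \<le> (\<Sum>x\<in>R. norm (poly Z x)) * (2 / \<delta>) ^ (card R - 1)"
proof -
  define D where "D x = (\<Prod>y\<in>R - {x}. x - y)" for x
  define N where "N x = (\<Prod>y\<in>R - {x}. [:- y, 1:])" for x
  have "coeff Z k = (\<Sum>x\<in>R. poly Z x / D x * coeff (N x) k)"
    by (subst lagrange_interpolation[OF assms(1,2)]) (simp add: coeff_sum D_def N_def)
  also have "norm \<dots> \<le> (\<Sum>x\<in>R. norm (poly Z x) * (2 / \<delta>) ^ (card R - 1))"
  proof (rule order_trans[OF norm_sum sum_mono])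
    fix x assume x: "x \<in> R"
    have card: "card (R - {x}) = card R - 1"
      using assms(1) x by simp
    have "norm (coeff (N x) k) \<le> 2 ^ (card R - 1)"
      unfolding N_def card[symmetric] using assms(1,3) by (intro norm_coeff_prod_linear_le) auto
    moreover have "\<delta> ^ (card R - 1) \<le> norm (D x)"
    proof -
      have "\<delta> ^ (card R - 1) = (\<Prod>y\<in>R - {x}. \<delta>)"
        by (simp add: card)
      also have "\<dots> \<le> (\<Prod>y\<in>R - {x}. norm (x - y))"
        using dist[of x] x \<open>0 < \<delta>\<close> by (intro prod_mono) auto
      finally show ?thesis
        by (simp add: D_def prod_norm)
    qed
    moreover have "0 < \<delta> ^ (card R - 1)"
      using \<open>0 < \<delta>\<close> by simp
    ultimately have "norm (coeff (N x) k) / norm (D x) \<le> (2 / \<delta>) ^ (card R - 1)"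
      unfolding power_divide by (intro frac_le) auto
    then have "norm (poly Z x) * (norm (coeff (N x) k) / norm (D x))
        \<le> norm (poly Z x) * (2 / \<delta>) ^ (card R - 1)"
      by (rule mult_left_mono) simp
    then show "norm (poly Z x / D x * coeff (N x) k) \<le> norm (poly Z x) * (2 / \<delta>) ^ (card R - 1)"
      by (simp add: norm_mult norm_divide)
  qed
  finally show ?thesis
    by (simp add: sum_distrib_right)
qed

section \<open>Head and tail of sums over roots of unity\<close>

lemma sum_lessThan_add:
  fixes m d :: nat
  shows "(\<Sum>i<m + d. f i) = (\<Sum>i<m. f i) + (\<Sum>k<d. f (m + k))"
  by (induction d) (simp_all add: add_ac)

lemma norm_poly_tail_le:
  fixes Y :: "nat \<Rightarrow> 'a::real_normed_field"
  assumes "(\<Sum>i<m + d. Y i * r ^ i) = 0" "norm r = 1"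
  shows "norm (poly (\<Sum>k<d. monom (Y (m + k)) k) r) \<le> (\<Sum>i<m. norm (Y i))"
proof -
  let ?Z = "\<Sum>k<d. monom (Y (m + k)) k"
  have "r ^ m * poly ?Z r = (\<Sum>k<d. Y (m + k) * r ^ (m + k))"
    unfolding poly_sum poly_monom sum_distrib_left by (intro sum.cong) (simp_all add: power_add)
  also have "\<dots> = - (\<Sum>i<m. Y i * r ^ i)"
    using assms(1) unfolding sum_lessThan_add by (simp add: eq_neg_iff_add_eq_0 add.commute)
  finally have tail_eq: "r ^ m * poly ?Z r = - (\<Sum>i<m. Y i * r ^ i)" .
  have "norm (poly ?Z r) = norm (r ^ m * poly ?Z r)"
    using assms(2) by (simp add: norm_mult norm_power)
  also have "\<dots> = norm (\<Sum>i<m. Y i * r ^ i)"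
    unfolding tail_eq by (rule norm_minus_cancel)
  also have "\<dots> \<le> (\<Sum>i<m. norm (Y i))"
    using norm_sum[of "\<lambda>i. Y i * r ^ i"] assms(2) by (simp add: norm_mult norm_power)
  finally show ?thesis .
qed

lemma norm_tail_le_head:
  fixes Y :: "nat \<Rightarrow> complex" and R :: "complex set"
  assumes roots: "\<And>r. r \<in> R \<Longrightarrow> r ^ (m + d) = 1" and card_R: "card R = d"
    and vanish: "\<And>r. r \<in> R \<Longrightarrow> (\<Sum>i<m + d. Y i * r ^ i) = 0" and "k < d"
  shows "cmod (Y (m + k)) \<le> real d * (\<Sum>i<m. cmod (Y i)) * real (m + d) ^ (d - 1)"
proof -
  define Z where "Z = (\<Sum>l<d. monom (Y (m + l)) l)"
  have "finite R"
    using \<open>k < d\<close> card_R card.infinite[of R] by auto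
  have norm_R: "cmod r = 1" if "r \<in> R" for r
    using power_eq_1_iff[OF roots[OF that]] \<open>k < d\<close> by simp
  have "degree Z \<le> d - 1"
    unfolding Z_def by (intro degree_sum_le) (auto intro: order.trans[OF degree_monom_le])
  then have deg_Z: "degree Z < card R"
    using \<open>k < d\<close> card_R by linarith
  have "cmod (Y (m + k)) = cmod (coeff Z k)"
    using \<open>k < d\<close> by (simp add: Z_def coeff_sum)
  also have "\<dots> \<le> (\<Sum>r\<in>R. cmod (poly Z r)) * (2 / (2 / real (m + d))) ^ (card R - 1)"
    using \<open>finite R\<close> deg_Z norm_R norm_diff_roots_unity_ge[of _ "m + d"] roots \<open>k < d\<close>
    by (intro norm_coeff_le_interpolation) auto
  also have "\<dots> = (\<Sum>r\<in>R. cmod (poly Z r)) * real (m + d) ^ (d - 1)"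
    using card_R by (simp del: of_nat_add)
  also have "\<dots> \<le> (real d * (\<Sum>i<m. cmod (Y i))) * real (m + d) ^ (d - 1)"
  proof (rule mult_right_mono)
    have "(\<Sum>r\<in>R. cmod (poly Z r)) \<le> (\<Sum>r\<in>R. \<Sum>i<m. cmod (Y i))"
      unfolding Z_def using norm_poly_tail_le[OF vanish norm_R] by (intro sum_mono)
    then show "(\<Sum>r\<in>R. cmod (poly Z r)) \<le> real d * (\<Sum>i<m. cmod (Y i))"
      using card_R by simp
  qed simp
  finally show ?thesis .
qed

lemma tail_energy_le_head_energy:
  fixes Y :: "nat \<Rightarrow> complex" and R :: "complex set"
  assumes roots: "\<And>r. r \<in> R \<Longrightarrow> r ^ (m + d) = 1" and card_R: "card R = d"
    and vanish: "\<And>r. r \<in> R \<Longrightarrow> (\<Sum>i<m + d. Y i * r ^ i) = 0"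
  shows "(\<Sum>k<d. (cmod (Y (m + k)))\<^sup>2) \<le> real (m + d) ^ (2 * d + 3) * (\<Sum>i<m. (cmod (Y i))\<^sup>2)"
proof -
  define q where "q = m + d"
  define H where "H = (\<Sum>i<m. (cmod (Y i))\<^sup>2)"
  have "0 \<le> H"
    unfolding H_def by (simp add: sum_nonneg)
  have "cmod (Y i) \<le> sqrt H" if "i < m" for i
    unfolding H_def using that by (intro real_le_rsqrt member_le_sum) auto
  then have head: "(\<Sum>i<m. cmod (Y i)) \<le> real m * sqrt H"
    using sum_mono[of "{..<m}" "\<lambda>i. cmod (Y i)" "\<lambda>_. sqrt H"] by simp
  have tail: "cmod (Y (m + k)) \<le> real q ^ (d + 1) * sqrt H" if "k < d" for k
  proof -
    have "real d * (\<Sum>i<m. cmod (Y i)) * real q ^ (d - 1) \<le> real d * (real m * sqrt H) * real q ^ (d - 1)"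
      using head by (intro mult_right_mono mult_left_mono) auto
    then have "cmod (Y (m + k)) \<le> real d * (real m * sqrt H) * real q ^ (d - 1)"
      using norm_tail_le_head[OF roots card_R vanish that] unfolding q_def by linarith
    also have "\<dots> \<le> real q * (real q * sqrt H) * real q ^ (d - 1)"
      using \<open>0 \<le> H\<close> by (intro mult_right_mono mult_mono) (auto simp: q_def)
    also have "\<dots> = real q ^ (d + 1) * sqrt H"
      using that by (cases d) (simp_all add: mult_ac)
    finally show ?thesis .
  qed
  have "(\<Sum>k<d. (cmod (Y (m + k)))\<^sup>2) \<le> (\<Sum>k<d. (real q ^ (d + 1) * sqrt H)\<^sup>2)"
    using tail by (intro sum_mono power_mono) auto
  also have "\<dots> = real d * (real q ^ (2 * d + 2) * H)"
  proof -
    have "2 * d + 2 = (d + 1) * 2" by simp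
    then have "(real q ^ (d + 1) * sqrt H)\<^sup>2 = real q ^ (2 * d + 2) * H"
      by (simp only: power_mult power_mult_distrib real_sqrt_pow2[OF \<open>0 \<le> H\<close>])
    then show ?thesis by simp
  qed
  also have "\<dots> \<le> real q * (real q ^ (2 * d + 2) * H)"
    using \<open>0 \<le> H\<close> by (intro mult_right_mono) (auto simp: q_def)
  also have "\<dots> = real q ^ (2 * d + 3) * H"
    by (simp add: numeral_3_eq_3)
  finally show ?thesis
    unfolding q_def H_def .
qed

lemma annihilating_roots_unity_exist:
  fixes s :: "nat \<Rightarrow> complex"
  assumes "0 < q" "m \<le> q" "inj_on s {..<m}" "\<And>j. j < m \<Longrightarrow> s j ^ q = 1"
  obtains R where "\<And>r. r \<in> R \<Longrightarrow> r ^ q = 1" "card R = q - m"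
    "\<And>r. r \<in> R \<Longrightarrow> (\<Sum>i<q. (\<Sum>j<m. v j * s j ^ i) * r ^ i) = 0"
proof
  let ?R = "cnj ` ({z. z ^ q = 1} - s ` {..<m})"
  show "r ^ q = 1" if "r \<in> ?R" for r
    using that by (auto simp flip: complex_cnj_power)
  have "card ?R = card ({z. z ^ q = 1} - s ` {..<m})"
    by (rule card_image) (simp add: inj_on_def)
  also have "\<dots> = card {z::complex. z ^ q = 1} - card (s ` {..<m})"
    using assms(4) by (subst card_Diff_subset) auto
  also have "\<dots> = q - m"
    using assms(1,3) by (simp add: card_roots_unity_eq card_image)
  finally show "card ?R = q - m" .
  show "(\<Sum>i<q. (\<Sum>j<m. v j * s j ^ i) * r ^ i) = 0" if "r \<in> ?R" for r
    using that assms(4) sum_roots_unity_mult_cnj_pow_eq_0[of "{..<m}" s q _ v] by auto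
qed

lemma sum_norm_sq_le_roots_unity_sums:
  fixes s :: "nat \<Rightarrow> complex"
  assumes "2 \<le> q" "m \<le> q" "inj_on s {..<m}" "\<And>j. j < m \<Longrightarrow> s j ^ q = 1"
  shows "(\<Sum>j<m. (cmod (v j))\<^sup>2)
    \<le> real q ^ (2 * (q - m) + 3) * (\<Sum>i<m. (cmod (\<Sum>j<m. v j * s j ^ i))\<^sup>2)"
proof -
  define d where "d = q - m"
  define Y where "Y i = (\<Sum>j<m. v j * s j ^ i)" for i
  define H where "H = (\<Sum>i<m. (cmod (Y i))\<^sup>2)"
  have q: "q = m + d"
    using assms(2) by (simp add: d_def)
  obtain R where "\<And>r. r \<in> R \<Longrightarrow> r ^ (m + d) = 1" "card R = d"
    "\<And>r. r \<in> R \<Longrightarrow> (\<Sum>i<m + d. Y i * r ^ i) = 0"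
    using annihilating_roots_unity_exist[of q m s v] assms unfolding Y_def d_def q[symmetric] by auto
  then have tail: "(\<Sum>k<d. (cmod (Y (m + k)))\<^sup>2) \<le> real q ^ (2 * d + 3) * H"
    unfolding H_def q by (rule tail_energy_le_head_energy)
  have "real q * (\<Sum>j<m. (cmod (v j))\<^sup>2) = (\<Sum>i<q. (cmod (Y i))\<^sup>2)"
    unfolding Y_def using assms(3,4) by (intro parseval_roots_unity[symmetric]) auto
  also have "\<dots> = H + (\<Sum>k<d. (cmod (Y (m + k)))\<^sup>2)"
    unfolding H_def q by (rule sum_lessThan_add)
  also have "\<dots> \<le> (1 + real q ^ (2 * d + 3)) * H"
    using tail by (simp add: algebra_simps)
  also have "\<dots> \<le> real q * (real q ^ (2 * d + 3) * H)"
  proof -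
    have "1 \<le> real q ^ (2 * d + 3)"
      using assms(1) by (intro one_le_power) simp
    moreover have "2 * real q ^ (2 * d + 3) \<le> real q * real q ^ (2 * d + 3)"
      using assms(1) by (intro mult_right_mono) auto
    ultimately have "1 + real q ^ (2 * d + 3) \<le> real q * real q ^ (2 * d + 3)"
      by linarith
    then show ?thesis
      by (simp add: H_def sum_nonneg mult_right_mono mult.assoc[symmetric])
  qed
  finally show ?thesis
    using assms(1) by (simp add: H_def Y_def d_def)
qed

section \<open>Vector norms and condition numbers\<close>

lemma vec_2norm_nonneg: "0 \<le> vec_2norm v"
  by (simp add: vec_2norm_def sum_nonneg)

lemma vec_2norm_zero [simp]: "vec_2norm (0\<^sub>v n) = 0"
  by (simp add: vec_2norm_def)

lemma vec_2norm_eq_0_iff: "vec_2norm v = 0 \<longleftrightarrow> v = 0\<^sub>v (dim_vec v)"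
proof
  assume "vec_2norm v = 0"
  then have "(\<Sum>i<dim_vec v. (cmod (v $ i))\<^sup>2) = 0"
    unfolding vec_2norm_def by (simp add: sum_nonneg)
  then have "\<forall>i\<in>{..<dim_vec v}. (cmod (v $ i))\<^sup>2 = 0"
    by (subst (asm) sum_nonneg_eq_0_iff) auto
  then show "v = 0\<^sub>v (dim_vec v)"
    by (intro eq_vecI) auto
qed (metis vec_2norm_zero)

lemma norm_vec_index_le_vec_2norm: "j < dim_vec v \<Longrightarrow> cmod (v $ j) \<le> vec_2norm v"
  unfolding vec_2norm_def by (intro real_le_rsqrt member_le_sum) auto

lemma vec_2norm_le_if_sum_sq_le:
  assumes "(\<Sum>i<dim_vec v. (cmod (v $ i))\<^sup>2) \<le> c\<^sup>2 * (\<Sum>i<dim_vec w. (cmod (w $ i))\<^sup>2)" "0 \<le> c"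
  shows "vec_2norm v \<le> c * vec_2norm w"
proof -
  have "vec_2norm v \<le> sqrt (c\<^sup>2 * (\<Sum>i<dim_vec w. (cmod (w $ i))\<^sup>2))"
    unfolding vec_2norm_def using assms(1) by (rule real_sqrt_le_mono)
  also have "\<dots> = c * vec_2norm w"
    using assms(2) by (simp add: vec_2norm_def real_sqrt_mult)
  finally show ?thesis .
qed

lemma spec_norm_le:
  assumes "0 \<le> c" and bound: "\<And>v. v \<in> carrier_vec (dim_col A) \<Longrightarrow> vec_2norm (A *\<^sub>v v) \<le> c * vec_2norm v"
  shows "spec_norm A \<le> c" and "0 \<le> spec_norm A"
proof -
  define X where "X = {vec_2norm (A *\<^sub>v v) | v. v \<in> carrier_vec (dim_col A) \<and> vec_2norm v \<le> 1}"
  have X_le: "x \<le> c" if x_X: "x \<in> X" for x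
  proof -
    obtain v where v: "v \<in> carrier_vec (dim_col A)" "vec_2norm v \<le> 1" and x: "x = vec_2norm (A *\<^sub>v v)"
      using x_X unfolding X_def by blast
    have "x \<le> c * vec_2norm v"
      using bound[OF v(1)] x by simp
    also have "\<dots> \<le> c"
      using v(2) assms(1) by (simp add: mult_left_le)
    finally show ?thesis .
  qed
  have "vec_2norm (A *\<^sub>v 0\<^sub>v (dim_col A)) \<le> 0"
    using bound[of "0\<^sub>v (dim_col A)"] by simp
  then have "vec_2norm (A *\<^sub>v 0\<^sub>v (dim_col A)) = 0"
    using vec_2norm_nonneg by (rule order_antisym)
  then have "0 \<in> X"
    unfolding X_def by force
  then show "spec_norm A \<le> c" "0 \<le> spec_norm A"
    unfolding spec_norm_def X_def[symmetric] using X_le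
    by (auto intro!: cSup_least cSup_upper bdd_aboveI)
qed

lemma cond_num_eq_inverse:
  assumes A: "A \<in> carrier_mat n n" and B: "B \<in> carrier_mat n n"
    and AB: "A * B = 1\<^sub>m n" and BA: "B * A = 1\<^sub>m n"
  shows "cond_num A = ereal (spec_norm A * spec_norm B)"
proof -
  have inverse: "B' \<in> carrier_mat (dim_row A) (dim_row A) \<and> inverts_mat A B' \<and> inverts_mat B' A \<longleftrightarrow> B' = B"
    for B'
  proof
    assume "B' \<in> carrier_mat (dim_row A) (dim_row A) \<and> inverts_mat A B' \<and> inverts_mat B' A"
    then have B': "B' \<in> carrier_mat n n" "B' * A = 1\<^sub>m n"
      using A by (auto simp: inverts_mat_def)
    have "B' = B' * (A * B)"
      using B' by (simp add: AB)
    also have "\<dots> = B' * A * B"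
      using assoc_mult_mat[OF B'(1) A B] by simp
    also have "\<dots> = B"
      using B B' by simp
    finally show "B' = B" .
  qed (use A B AB BA in \<open>auto simp: inverts_mat_def\<close>)
  have "invertible_mat A"
    using A B AB BA by (auto simp: invertible_mat_def inverts_mat_def square_mat.simps)
  then show ?thesis
    unfolding cond_num_def inverse by simp
qed

lemma cond_num_le:
  assumes A: "A \<in> carrier_mat n n" and "0 \<le> a" "0 \<le> b"
    and upper: "\<And>v. v \<in> carrier_vec n \<Longrightarrow> vec_2norm (A *\<^sub>v v) \<le> a * vec_2norm v"
    and lower: "\<And>v. v \<in> carrier_vec n \<Longrightarrow> vec_2norm v \<le> b * vec_2norm (A *\<^sub>v v)"
  shows "cond_num A \<le> ereal (a * b)"
proof -
  have "det A \<noteq> 0"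
  proof
    assume "det A = 0"
    then obtain v where v: "v \<in> carrier_vec n" "v \<noteq> 0\<^sub>v n" "A *\<^sub>v v = 0\<^sub>v n"
      using det_0_iff_vec_prod_zero[OF A] by blast
    then have "vec_2norm v \<le> 0"
      using lower[OF v(1)] by simp
    then show False
      using v vec_2norm_nonneg[of v] by (simp add: vec_2norm_eq_0_iff)
  qed
  then obtain B where B: "B \<in> carrier_mat n n" and BA: "B * A = 1\<^sub>m n" and AB: "A * B = 1\<^sub>m n"
    using det_non_zero_imp_unit[OF A] by (auto simp: Units_def ring_mat_def)
  have "vec_2norm (B *\<^sub>v w) \<le> b * vec_2norm w" if "w \<in> carrier_vec (dim_col B)" for w
  proof -
    have "A *\<^sub>v (B *\<^sub>v w) = w"
      using that A B by (simp add: assoc_mult_mat_vec[symmetric] AB)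
    then show ?thesis
      using lower[of "B *\<^sub>v w"] that B by simp
  qed
  then have "spec_norm B \<le> b" "0 \<le> spec_norm B"
    using spec_norm_le[OF \<open>0 \<le> b\<close>] by blast+
  moreover have "spec_norm A \<le> a"
    using A by (intro spec_norm_le(1)[OF \<open>0 \<le> a\<close>] upper) simp
  ultimately have "spec_norm A * spec_norm B \<le> a * b"
    using \<open>0 \<le> a\<close> by (intro mult_mono) auto
  then show ?thesis
    by (simp add: cond_num_eq_inverse[OF A B AB BA])
qed

section \<open>Vandermonde matrices at roots of unity\<close>

lemma vandermonde_mult_vec_index:
  assumes "v \<in> carrier_vec m" "i < m"
  shows "(vandermonde m s *\<^sub>v v) $ i = (\<Sum>j<m. v $ j * s j ^ i)"
  using assms by (auto simp: vandermonde_def scalar_prod_def lessThan_atLeast0 mult.commute intro: sum.cong)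

lemma vec_2norm_vandermonde_le:
  assumes "\<And>j. j < m \<Longrightarrow> cmod (s j) \<le> 1" "v \<in> carrier_vec m"
  shows "vec_2norm (vandermonde m s *\<^sub>v v) \<le> real m ^ 2 * vec_2norm v"
proof (rule vec_2norm_le_if_sum_sq_le)
  have entry: "cmod ((vandermonde m s *\<^sub>v v) $ i) \<le> real m * vec_2norm v" if "i < m" for i
  proof -
    have "cmod ((vandermonde m s *\<^sub>v v) $ i) \<le> (\<Sum>j<m. cmod (v $ j) * cmod (s j) ^ i)"
      unfolding vandermonde_mult_vec_index[OF assms(2) that]
      using norm_sum[of "\<lambda>j. v $ j * s j ^ i"] by (simp add: norm_mult norm_power)
    also have "\<dots> \<le> (\<Sum>j<m. vec_2norm v)"
    proof (rule sum_mono)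
      fix j assume "j \<in> {..<m}"
      then have "cmod (v $ j) * cmod (s j) ^ i \<le> cmod (v $ j)"
        using assms(1) by (intro mult_left_le power_le_one) auto
      also have "\<dots> \<le> vec_2norm v"
        using \<open>j \<in> {..<m}\<close> assms(2) by (intro norm_vec_index_le_vec_2norm) auto
      finally show "cmod (v $ j) * cmod (s j) ^ i \<le> vec_2norm v" .
    qed
    finally show ?thesis
      by simp
  qed
  have "(\<Sum>i<m. (cmod ((vandermonde m s *\<^sub>v v) $ i))\<^sup>2) \<le> (\<Sum>i<m. (real m * vec_2norm v)\<^sup>2)"
    using entry by (intro sum_mono power_mono) auto
  also have "\<dots> = real m ^ 3 * (vec_2norm v)\<^sup>2"
    by (simp add: power_mult_distrib power2_eq_square power3_eq_cube)
  also have "\<dots> \<le> (real m ^ 2)\<^sup>2 * (vec_2norm v)\<^sup>2"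
  proof (rule mult_right_mono)
    show "real m ^ 3 \<le> (real m ^ 2)\<^sup>2"
      by (cases "m = 0") (auto simp flip: power_mult intro: power_increasing)
  qed simp
  also have "(vec_2norm v)\<^sup>2 = (\<Sum>i<dim_vec v. (cmod (v $ i))\<^sup>2)"
    by (simp add: vec_2norm_def sum_nonneg)
  finally show "(\<Sum>i<dim_vec (vandermonde m s *\<^sub>v v). (cmod ((vandermonde m s *\<^sub>v v) $ i))\<^sup>2)
      \<le> (real m ^ 2)\<^sup>2 * (\<Sum>i<dim_vec v. (cmod (v $ i))\<^sup>2)"
    using assms(2) by (simp add: vandermonde_def)
qed simp

lemma vec_2norm_le_vandermonde_roots_unity:
  assumes "2 \<le> q" "m \<le> q" "inj_on s {..<m}" "\<And>j. j < m \<Longrightarrow> s j ^ q = 1" "v \<in> carrier_vec m"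
  shows "vec_2norm v \<le> real q ^ (q - m + 2) * vec_2norm (vandermonde m s *\<^sub>v v)"
proof (rule vec_2norm_le_if_sum_sq_le)
  have "(\<Sum>j<m. (cmod (v $ j))\<^sup>2)
      \<le> real q ^ (2 * (q - m) + 3) * (\<Sum>i<m. (cmod (\<Sum>j<m. v $ j * s j ^ i))\<^sup>2)"
    using assms(1-4) by (rule sum_norm_sq_le_roots_unity_sums)
  also have "\<dots> \<le> (real q ^ (q - m + 2))\<^sup>2 * (\<Sum>i<m. (cmod ((vandermonde m s *\<^sub>v v) $ i))\<^sup>2)"
  proof (rule mult_mono)
    have "2 * (q - m) + 4 = (q - m + 2) * 2"
      by simp
    then have "(real q ^ (q - m + 2))\<^sup>2 = real q ^ (2 * (q - m) + 4)"
      by (simp only: power_mult)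
    moreover have "real q ^ (2 * (q - m) + 3) \<le> real q ^ (2 * (q - m) + 4)"
      using assms(1) by (intro power_increasing) auto
    ultimately show "real q ^ (2 * (q - m) + 3) \<le> (real q ^ (q - m + 2))\<^sup>2"
      by (simp only:)
  qed (use assms(5) in \<open>auto simp: vandermonde_mult_vec_index sum_nonneg\<close>)
  finally show "(\<Sum>i<dim_vec v. (cmod (v $ i))\<^sup>2)
      \<le> (real q ^ (q - m + 2))\<^sup>2 * (\<Sum>i<dim_vec (vandermonde m s *\<^sub>v v). (cmod ((vandermonde m s *\<^sub>v v) $ i))\<^sup>2)"
    using assms(5) by (simp add: vandermonde_def)
qed simp

lemma cond_num_vandermonde_roots_unity_le:
  assumes "2 \<le> q" "m \<le> q" "inj_on s {..<m}" "\<And>j. j < m \<Longrightarrow> s j ^ q = 1"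
  shows "cond_num (vandermonde m s) \<le> ereal (real q ^ (q - m + 4))"
proof -
  have "cond_num (vandermonde m s) \<le> ereal (real m ^ 2 * real q ^ (q - m + 2))"
  proof (rule cond_num_le)
    show "vandermonde m s \<in> carrier_mat m m"
      by (simp add: vandermonde_def)
    have "cmod (s j) = 1" if "j < m" for j
      using power_eq_1_iff[OF assms(4)[OF that]] assms(1) by simp
    then show "vec_2norm (vandermonde m s *\<^sub>v v) \<le> real m ^ 2 * vec_2norm v" if "v \<in> carrier_vec m" for v
      using that by (intro vec_2norm_vandermonde_le) auto
    show "vec_2norm v \<le> real q ^ (q - m + 2) * vec_2norm (vandermonde m s *\<^sub>v v)" if "v \<in> carrier_vec m" for v
      using assms that by (rule vec_2norm_le_vandermonde_roots_unity)
  qed auto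
  moreover have "real m ^ 2 * real q ^ (q - m + 2) \<le> real q ^ 2 * real q ^ (q - m + 2)"
    using assms(2) by (intro mult_right_mono power_mono) auto
  moreover have "real q ^ 2 * real q ^ (q - m + 2) = real q ^ (q - m + 4)"
    by (simp add: power_add power2_eq_square power4_eq_xxxx mult_ac)
  ultimately show ?thesis
    by (metis ereal_less_eq(3) order_trans)
qed

theorem theorem1:
  shows "\<exists>C::real. \<forall>(q::nat) (m::nat) (s::nat \<Rightarrow> complex).
     odd q \<and> 0 < m \<and> m < q \<and> inj_on s {..<m}
     \<and> (\<forall>j<m. s j \<in> {omega q ^ k | k. k < q})
     \<longrightarrow> cond_num (vandermonde m s) \<le> ereal (C * real q powr (real q - real m + 5.5))"
proof (intro exI[of _ 1] allI impI)
  fix q m :: nat and s :: "nat \<Rightarrow> complex"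
  assume "odd q \<and> 0 < m \<and> m < q \<and> inj_on s {..<m} \<and> (\<forall>j<m. s j \<in> {omega q ^ k | k. k < q})"
  then have "2 \<le> q" "m \<le> q" "inj_on s {..<m}" "\<And>j. j < m \<Longrightarrow> s j ^ q = 1"
    using omega_pow_root_unity by auto
  then have "cond_num (vandermonde m s) \<le> ereal (real q ^ (q - m + 4))"
    by (rule cond_num_vandermonde_roots_unity_le)
  also have "real q ^ (q - m + 4) = real q powr real (q - m + 4)"
    using powr_realpow[of "real q" "q - m + 4"] \<open>2 \<le> q\<close> by simp
  also have "\<dots> \<le> real q powr (real q - real m + 5.5)"
    using \<open>2 \<le> q\<close> \<open>m \<le> q\<close> by (intro powr_mono) (auto simp: of_nat_diff)
  finally show "cond_num (vandermonde m s) \<le> ereal (1 * real q powr (real q - real m + 5.5))"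
    by simp
qed

end
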